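(* Let $m\ge 3$ and let $K\ne\Delta_{[m]}$ be a simplicial complex on $[m]$ such that $f_0(K)<m$ or $f_0(K^\vee)<m$. Then $\chi(\mathrm{Bier}(K))=m-1$ if and only if, after a permutation of $[m]$, $K$ equals one of the following complexes on $[m]$: $\Delta_{[m-1]}$; $\Delta_{[m-2]}$; $\Delta_{[m-1]}\cup\Delta_{[m-2]\cup\{m\}}$ (here $\Delta_I=2^I$). Moreover, in each of these cases $\mathrm{Bier}(K)$ is isomorphic to the $(m-3)$-fold iterated suspension $\Sigma^{m-3}(Z_4)$ of the 4-cycle, i.e. to the boundary complex of the $(m-1)$-dimensional cross-polytope.
   Context: A simplicial complex $K$ on $[m]=\{1,\dots,m\}$ is a nonempty family of subsets of $[m]$ closed under taking subsets; $V(K)=\{i:\{i\}\in K\}$ and $f_0(K)=|V(K)|$ (elements of $[m]\setminus V(K)$ are ghost vertices). Let $[m']=\{1',\dots,m'\}$ be a disjoint copy of $[m]$, $I'=\{i':i\in I\}$. For $K\ne 2^{[m]}$ the Alexander dual $K^\vee$ is the complex on $[m']$ with $J'\in K^\vee$ iff $[m]\setminus J\notin K$. The Bier sphere $\mathrm{Bier}(K)$ is the complex on $[m]\sqcup[m']$ with faces $I\sqcup J'$, $I\in K$, $J'\in K^\vee$, $I\cap J=\varnothing$. The chromatic number $\chi(L)$ is the least number of colors in a map $c\colon V(L)\to C$ with $c(u)\ne c(v)$ whenever $\{u,v\}\in L$. $Z_4$ is the 4-cycle graph; the suspension of $L$ is $\{\varnothing,\{v\},\{w\}\}*L$ for two new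 vertices $v,w$, where $*$ is the join. *)

theory Defs
  imports "HOL-Combinatorics.Permutations"
begin

definition simplicial_complex_on :: "nat \<Rightarrow> nat set set \<Rightarrow> bool" where
  "simplicial_complex_on m K \<longleftrightarrow> K \<noteq> {} \<and> (\<forall>F\<in>K. F \<subseteq> {1..m}) \<and>
     (\<forall>F\<in>K. \<forall>G. G \<subseteq> F \<longrightarrow> G \<in> K)"

definition vertices :: "'a set set \<Rightarrow> 'a set" where
  "vertices L = {v. {v} \<in> L}"

definition f0 :: "'a set set \<Rightarrow> nat" where
  "f0 L = card (vertices L)"

text \<open>Alexander dual on the copy [m']; the copy is represented by the same labels 1..m.\<close>
definition alex_dual :: "nat \<Rightarrow> nat set set \<Rightarrow> nat set set" where
  "alex_dual m K = {J. J \<subseteq> {1..m} \<and> {1..m} - J \<notin> K}"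

text \<open>Bier sphere on [m] \<squnion> [m']: Inl i stands for i, Inr i for i'.\<close>
definition bier :: "nat \<Rightarrow> nat set set \<Rightarrow> (nat + nat) set set" where
  "bier m K = {Inl ` I \<union> Inr ` J | I J. I \<in> K \<and> J \<in> alex_dual m K \<and> I \<inter> J = {}}"

definition chromatic_number :: "'a set set \<Rightarrow> nat" where
  "chromatic_number L = (LEAST n. \<exists>c :: 'a \<Rightarrow> nat.
      (\<forall>v\<in>vertices L. c v < n) \<and> (\<forall>u v. {u, v} \<in> L \<longrightarrow> u \<noteq> v \<longrightarrow> c u \<noteq> c v))"

definition join :: "'a set set \<Rightarrow> 'a set set \<Rightarrow> 'a set set" where
  "join A B = {F \<union> G | F G. F \<in> A \<and> G \<in> B}"

definition suspension :: "nat set set \<Rightarrow> nat set set" where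
  "suspension L = join {{}, {0}, {1}} ((`) ((`) (\<lambda>x. x + 2)) L)"

definition Z4 :: "nat set set" where
  "Z4 = {{}, {0}, {1}, {2}, {3}, {0,1}, {1,2}, {2,3}, {3,0}}"

definition complex_iso :: "'a set set \<Rightarrow> 'b set set \<Rightarrow> bool" where
  "complex_iso L M \<longleftrightarrow> (\<exists>f. inj_on f (\<Union>L) \<and> (`) ((`) f) L = M)"

end

theory Submission
  imports Defs
begin

text \<open>
  If \<open>p\<close> is a ghost vertex of \<open>K\<close>, every subset of \<open>[m] - {p}\<close> lies in \<open>K\<^sup>\<or>\<close>, so the vertices
  \<open>i'\<close> (\<open>i \<noteq> p\<close>) of \<open>Bier(K)\<close> form an \<open>(m - 1)\<close>-clique and \<open>\<chi>(Bier(K)) \<ge> m - 1\<close>.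
  Since \<open>Bier(K\<^sup>\<or>)\<close> is \<open>Bier(K)\<close> with \<open>i\<close> and \<open>i'\<close> exchanged, the same holds when \<open>K\<^sup>\<or>\<close> has
  a ghost vertex. In an \<open>(m - 1)\<close>-coloring the clique uses every color exactly once; a vertex
  adjacent to all of the clique but one member must share that member's color, and this forces
  \<open>K = \<Delta>\<^bsub>[m] - {p}\<^esub>\<close> or \<open>K = \<Delta>\<^bsub>[m] - {p, q}\<^esub>\<close>, or (dually) \<open>K = \<Delta>\<^bsub>[m] - {p}\<^esub> \<union> \<Delta>\<^bsub>[m] - {q}\<^esub>\<close>.
  Conversely, for these three complexes \<open>Bier(K)\<close> is the boundary of a cross-polytope on
  \<open>2(m - 1)\<close> vertices, as is \<open>\<Sigma>\<^sup>m\<^sup>-\<^sup>3 Z\<^sub>4\<close>; any two such boundaries are isomorphic, and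
  coloring antipodal pairs alike gives an \<open>(m - 1)\<close>-coloring.
\<close>

section \<open>Colorings\<close>

definition coloring :: "'a set set \<Rightarrow> nat \<Rightarrow> ('a \<Rightarrow> nat) \<Rightarrow> bool" where
  "coloring L n c \<longleftrightarrow> (\<forall>v\<in>vertices L. c v < n) \<and> (\<forall>u v. {u, v} \<in> L \<longrightarrow> u \<noteq> v \<longrightarrow> c u \<noteq> c v)"

definition colorable :: "'a set set \<Rightarrow> nat \<Rightarrow> bool" where
  "colorable L n \<longleftrightarrow> (\<exists>c. coloring L n c)"

definition clique :: "'a set set \<Rightarrow> 'a set \<Rightarrow> bool" where
  "clique L Q \<longleftrightarrow> Q \<subseteq> vertices L \<and> (\<forall>u\<in>Q. \<forall>v\<in>Q. u \<noteq> v \<longrightarrow> {u, v} \<in> L)"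

lemma chromatic_number_eq_Least: "chromatic_number L = (LEAST n. colorable L n)"
  unfolding chromatic_number_def colorable_def coloring_def ..

lemma chromatic_number_eqI:
  assumes "colorable L n" and "\<And>k. colorable L k \<Longrightarrow> n \<le> k"
  shows "chromatic_number L = n"
  unfolding chromatic_number_eq_Least using assms by (rule Least_equality)

lemma colorable_chromatic_number:
  assumes "colorable L n"
  shows "colorable L (chromatic_number L)"
  unfolding chromatic_number_eq_Least using assms by (rule LeastI)

lemma colorable_if_inj:
  assumes "inj c" and "\<forall>v\<in>vertices L. c v < n"
  shows "colorable L n"
  using assms unfolding colorable_def coloring_def by (metis injD)

lemma colorable_if_inj_simplicial_map:
  assumes "inj_on f (\<Union>M)" and "\<forall>H\<in>M. f ` H \<in> L" and "colorable L n"
  shows "colorable M n"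
proof -
  obtain c where c: "coloring L n c"
    using assms(3) unfolding colorable_def by blast
  have "coloring M n (c \<circ> f)"
    unfolding coloring_def
  proof (intro conjI ballI allI impI)
    fix v assume "v \<in> vertices M"
    then have "{f v} \<in> L" using assms(2) unfolding vertices_def by force
    then show "(c \<circ> f) v < n" using c unfolding coloring_def vertices_def by simp
  next
    fix u v assume uv: "{u, v} \<in> M" "u \<noteq> v"
    then have "{f u, f v} \<in> L" and "f u \<noteq> f v"
      using assms(1,2) by (force, auto dest: inj_onD)
    then show "(c \<circ> f) u \<noteq> (c \<circ> f) v" using c unfolding coloring_def by simp
  qed
  then show ?thesis unfolding colorable_def by blast
qed

lemma coloring_clique:
  assumes "coloring L n c" and "clique L Q"
  shows "inj_on c Q" and "c ` Q \<subseteq> {..<n}"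
  using assms unfolding coloring_def clique_def inj_on_def by blast+

lemma colorable_card_clique_le:
  assumes "colorable L n" and "clique L Q"
  shows "card Q \<le> n"
  using assms coloring_clique card_inj_on_le[of _ Q "{..<n}"]
  unfolding colorable_def by fastforce

lemma coloring_image_clique_eq:
  assumes "coloring L n c" and "clique L Q" and "card Q = n"
  shows "c ` Q = {..<n}"
proof -
  note clq = coloring_clique[OF assms(1,2)]
  have "finite Q" using clq finite_imageD finite_subset by blast
  then show ?thesis using clq assms(3) by (intro card_subset_eq) (auto simp: card_image)
qed

section \<open>Boundaries of cross-polytopes\<close>

definition antipodal :: "'a set \<Rightarrow> ('a \<Rightarrow> 'a) \<Rightarrow> bool" where
  "antipodal W b \<longleftrightarrow> (\<forall>x\<in>W. b x \<in> W \<and> b x \<noteq> x \<and> b (b x) = x)"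

definition cross :: "'a set \<Rightarrow> ('a \<Rightarrow> 'a) \<Rightarrow> 'a set set" where
  "cross W b = {F. F \<subseteq> W \<and> (\<forall>x\<in>F. b x \<notin> F)}"

lemma vertices_cross: "antipodal W b \<Longrightarrow> vertices (cross W b) = W"
  unfolding vertices_def cross_def antipodal_def by auto

lemma antipodal_remove_pair:
  assumes "antipodal W b" "x \<in> W"
  shows "antipodal (W - {x, b x}) b"
  using assms unfolding antipodal_def by (auto; metis)

lemma antipodal_bij_exists:
  assumes "finite W" "antipodal W b" "finite V" "antipodal V a" "card W = card V"
  shows "\<exists>f. bij_betw f W V \<and> (\<forall>x\<in>W. f (b x) = a (f x))"
  using assms
proof (induction "card W" arbitrary: W V rule: less_induct)
  case less
  show ?case
  proof (cases "W = {}")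
    case True
    then show ?thesis using less.prems by (auto simp: bij_betw_def)
  next
    case False
    then obtain x where x: "x \<in> W" by auto
    obtain y where y: "y \<in> V" using less.prems False by (metis card_0_eq equals0I)
    have bx: "b x \<in> W" "b x \<noteq> x" "b (b x) = x" using less.prems(2) x unfolding antipodal_def by auto
    have ay: "a y \<in> V" "a y \<noteq> y" "a (a y) = y" using less.prems(4) y unfolding antipodal_def by auto
    let ?W = "W - {x, b x}" and ?V = "V - {y, a y}"
    have cards: "card ?W = card W - 2" "card ?V = card V - 2"
      using x y bx ay less.prems by (simp_all add: card_Diff_subset)
    have "card W \<ge> 2"
      using card_mono[OF less.prems(1), of "{x, b x}"] x bx by simp
    then have "card ?W < card W" "card ?W = card ?V"
      using cards less.prems(5) by linarith+
    moreover have "antipodal ?W b" "antipodal ?V a"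
      by (rule antipodal_remove_pair[OF less.prems(2) x], rule antipodal_remove_pair[OF less.prems(4) y])
    ultimately obtain g where g: "bij_betw g ?W ?V" "\<forall>z\<in>?W. g (b z) = a (g z)"
      using less.hyps less.prems(1,3) by blast
    define f where "f z = (if z = x then y else if z = b x then a y else g z)" for z
    have "bij_betw f ?W ?V"
      using g(1) by (rule bij_betw_cong[THEN iffD1, rotated]) (auto simp: f_def)
    moreover have "bij_betw f {x, b x} {y, a y}"
      using bx ay by (auto simp: bij_betw_def f_def inj_on_def)
    ultimately have "bij_betw f (?W \<union> {x, b x}) (?V \<union> {y, a y})"
      by (rule bij_betw_combine) auto
    moreover have "?W \<union> {x, b x} = W" "?V \<union> {y, a y} = V" using x bx y ay by auto
    ultimately have "bij_betw f W V" by simp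
    moreover have "f (b z) = a (f z)" if "z \<in> W" for z
    proof (cases "z \<in> {x, b x}")
      case True then show ?thesis using bx ay by (auto simp: f_def)
    next
      case False
      then have "b z \<in> ?W" using antipodal_remove_pair[OF less.prems(2) x] that
        unfolding antipodal_def by auto
      then show ?thesis using False that g(2) by (auto simp: f_def)
    qed
    ultimately show ?thesis by blast
  qed
qed

lemma image_cross:
  assumes "bij_betw f W V" and "\<forall>x\<in>W. f (b x) = a (f x)" and "antipodal W b"
  shows "(`) ((`) f) (cross W b) = cross V a"
proof (intro equalityI subsetI)
  have inj: "inj_on f W" using assms(1) by (rule bij_betw_imp_inj_on)
  fix G assume "G \<in> (`) ((`) f) (cross W b)"
  then obtain F where F: "F \<subseteq> W" "\<forall>x\<in>F. b x \<notin> F" "G = f ` F" by (auto simp: cross_def)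
  have "a (f x) \<noteq> f x'" if "x \<in> F" "x' \<in> F" for x x'
  proof
    assume "a (f x) = f x'"
    then have "b x = x'" using assms(2,3) inj F(1) that unfolding antipodal_def
      by (metis inj_onD subsetD)
    then show False using F(2) that by auto
  qed
  moreover have "G \<subseteq> V" using F assms(1) by (auto simp: bij_betw_def)
  ultimately show "G \<in> cross V a" using F(3) by (auto simp: cross_def)
next
  fix G assume G: "G \<in> cross V a"
  then have "f ` (W \<inter> f -` G) = G" using assms(1) unfolding bij_betw_def cross_def by auto
  moreover have "W \<inter> f -` G \<in> cross W b"
    using G assms(2,3) unfolding antipodal_def cross_def by auto
  ultimately show "G \<in> (`) ((`) f) (cross W b)" by blast
qed

lemma complex_iso_cross:
  assumes "finite W" "antipodal W b" "finite V" "antipodal V a" "card W = card V"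
  shows "complex_iso (cross W b) (cross V a)"
proof -
  obtain f where f: "bij_betw f W V" "\<forall>x\<in>W. f (b x) = a (f x)"
    using antipodal_bij_exists[OF assms] by blast
  have "inj_on f (\<Union>(cross W b))"
    using bij_betw_imp_inj_on[OF f(1)] by (rule inj_on_subset) (auto simp: cross_def)
  then show ?thesis
    unfolding complex_iso_def using image_cross[OF f assms(2)] by blast
qed

definition mirror :: "'a + 'a \<Rightarrow> 'a + 'a" where
  "mirror = case_sum Inr Inl"

lemma mirror_simps [simp]: "mirror (Inl x) = Inr x" "mirror (Inr x) = Inl x"
  by (simp_all add: mirror_def)

lemma mirror_mirror [simp]: "mirror (mirror x) = x"
  by (cases x) simp_all

lemma inj_mirror: "inj mirror"
  by (metis injI mirror_mirror)

lemma antipodal_mirror: "antipodal (Inl ` A \<union> Inr ` A) mirror"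
  unfolding antipodal_def by auto

lemma card_Inl_Inr_image:
  assumes "finite A" "finite B"
  shows "card (Inl ` A \<union> Inr ` B) = card A + card B"
  using assms by (subst card_Un_disjoint) (auto simp: card_image)

lemma colorable_cross:
  assumes "finite W" "antipodal W b" "card W = 2 * k"
  shows "colorable (cross W b) k"
proof -
  let ?V = "Inl ` {..<k} \<union> Inr ` {..<k}"
  have "card ?V = 2 * k" by (simp add: card_Inl_Inr_image)
  then obtain f where f: "bij_betw f W ?V" "\<forall>x\<in>W. f (b x) = mirror (f x)"
    using antipodal_bij_exists[OF assms(1,2) _ antipodal_mirror, of "{..<k}"] assms(3) by auto
  have "coloring (cross ?V mirror) k (case_sum id id)"
    unfolding coloring_def vertices_cross[OF antipodal_mirror]
  proof (intro conjI ballI allI impI)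
    fix u v :: "nat + nat"
    assume "{u, v} \<in> cross ?V mirror" "u \<noteq> v"
    then have "mirror u \<noteq> v" unfolding cross_def by blast
    then show "case_sum id id u \<noteq> case_sum id id v"
      using \<open>u \<noteq> v\<close> by (cases u; cases v) simp_all
  qed auto
  then have "colorable (cross ?V mirror) k" unfolding colorable_def by blast
  moreover have "inj_on f (\<Union>(cross W b))"
    using bij_betw_imp_inj_on[OF f(1)] by (rule inj_on_subset) (auto simp: cross_def)
  moreover have "\<forall>H\<in>cross W b. f ` H \<in> cross ?V mirror"
    using image_cross[OF f assms(2)] by blast
  ultimately show ?thesis by (rule colorable_if_inj_simplicial_map[rotated 2])
qed

section \<open>Iterated suspensions of the square\<close>

definition square_antipode :: "nat \<Rightarrow> nat" where
  "square_antipode x = (if x = 0 then 2 else if x = 2 then 0 else if x = 1 then 3 else if x = 3 then 1 else x)"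

lemma Z4_eq_cross: "Z4 = cross {0, 1, 2, 3} square_antipode"
proof (intro equalityI subsetI)
  fix F assume "F \<in> Z4"
  then show "F \<in> cross {0, 1, 2, 3} square_antipode"
    unfolding Z4_def cross_def by (auto simp: square_antipode_def)
next
  fix F assume "F \<in> cross {0, 1, 2, 3 :: nat} square_antipode"
  then have "F \<subseteq> {0, 1, 2, 3}" "\<not> {0, 2} \<subseteq> F" "\<not> {1, 3} \<subseteq> F"
    unfolding cross_def by (auto simp: square_antipode_def)
  moreover have "F = (if 0 \<in> F then {0} else {}) \<union> (if 1 \<in> F then {1} else {}) \<union>
      (if 2 \<in> F then {2} else {}) \<union> (if 3 \<in> F then {3} else {})"
    using calculation(1) by auto
  ultimately show "F \<in> Z4"
    unfolding Z4_def
    by (cases "0 \<in> F"; cases "1 \<in> F"; cases "2 \<in> F"; cases "3 \<in> F") (simp_all add: insert_commute)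
qed

definition suspension_antipode :: "(nat \<Rightarrow> nat) \<Rightarrow> nat \<Rightarrow> nat" where
  "suspension_antipode a x = (if x = 0 then 1 else if x = 1 then 0 else a (x - 2) + 2)"

lemma suspension_cross:
  "suspension (cross V a) = cross ({0, 1} \<union> (\<lambda>x. x + 2) ` V) (suspension_antipode a)"
proof (intro equalityI subsetI)
  fix H assume "H \<in> suspension (cross V a)"
  then obtain F G where H: "H = F \<union> (\<lambda>x. x + 2) ` G" "F \<in> {{}, {0}, {1}}" "G \<in> cross V a"
    unfolding suspension_def join_def by auto
  then show "H \<in> cross ({0, 1} \<union> (\<lambda>x. x + 2) ` V) (suspension_antipode a)"
    unfolding cross_def suspension_antipode_def by auto
next
  fix H assume H: "H \<in> cross ({0, 1} \<union> (\<lambda>x. x + 2) ` V) (suspension_antipode a)"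
  define G where "G = (\<lambda>x. x - 2) ` (H - {0, 1})"
  have shift: "(\<lambda>x. x + 2) ` G = H - {0, 1}"
    unfolding G_def image_image by (rule image_cong[where g = id, simplified]) auto
  have "G \<in> cross V a"
    using H shift unfolding cross_def suspension_antipode_def by (fastforce simp: G_def)
  moreover have "H \<inter> {0, 1} \<in> {{}, {0}, {1}}"
    using H unfolding cross_def suspension_antipode_def by auto
  moreover have "H = H \<inter> {0, 1} \<union> (\<lambda>x. x + 2) ` G" using shift by auto
  ultimately show "H \<in> suspension (cross V a)"
    unfolding suspension_def join_def by blast
qed

lemma antipodal_suspension:
  assumes "antipodal V a"
  shows "antipodal ({0, 1} \<union> (\<lambda>x. x + 2) ` V) (suspension_antipode a)"
  using assms unfolding antipodal_def suspension_antipode_def by auto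

lemma card_suspension_vertices:
  fixes V :: "nat set"
  assumes "finite V"
  shows "card ({0, 1} \<union> (\<lambda>x. x + 2) ` V) = card V + 2"
  using assms by (subst card_Un_disjoint) (auto simp: card_image inj_on_def)

lemma iterated_suspension_Z4_eq_cross:
  "\<exists>V a. finite V \<and> antipodal V a \<and> card V = 2 * n + 4 \<and> (suspension ^^ n) Z4 = cross V a"
proof (induction n)
  case 0
  have "antipodal {0, 1, 2, 3} square_antipode"
    unfolding antipodal_def square_antipode_def by auto
  then show ?case
    by (intro exI[of _ "{0, 1, 2, 3}"] exI[of _ square_antipode]) (simp add: Z4_eq_cross)
next
  case (Suc n)
  then obtain V a where V: "finite V" "antipodal V a" "card V = 2 * n + 4"
    and eq: "(suspension ^^ n) Z4 = cross V a"
    by blast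
  let ?V = "{0, 1} \<union> (\<lambda>x. x + 2) ` V"
  have "card ?V = 2 * Suc n + 4" using card_suspension_vertices[OF V(1)] V(3) by simp
  moreover have "(suspension ^^ Suc n) Z4 = cross ?V (suspension_antipode a)"
    by (simp add: eq suspension_cross)
  moreover have "finite ?V" using V(1) by simp
  ultimately show ?case using antipodal_suspension[OF V(2)] by blast
qed

section \<open>Bier spheres\<close>

lemma simplicial_complex_onD:
  assumes "simplicial_complex_on m K"
  shows "{} \<in> K" and "F \<in> K \<Longrightarrow> F \<subseteq> {1..m}" and "F \<in> K \<Longrightarrow> G \<subseteq> F \<Longrightarrow> G \<in> K"
  using assms unfolding simplicial_complex_on_def by blast+

lemma full_simplex_notin:
  assumes "simplicial_complex_on m K" and "K \<noteq> Pow {1..m}"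
  shows "{1..m} \<notin> K"
  using assms simplicial_complex_onD(2,3)[OF assms(1)] by blast

lemma alex_dual_alex_dual:
  assumes "simplicial_complex_on m K"
  shows "alex_dual m (alex_dual m K) = K"
  using simplicial_complex_onD(2)[OF assms] unfolding alex_dual_def by (auto simp: double_diff)

lemma simplicial_complex_on_alex_dual:
  assumes "simplicial_complex_on m K" and "K \<noteq> Pow {1..m}"
  shows "simplicial_complex_on m (alex_dual m K)" and "alex_dual m K \<noteq> Pow {1..m}"
proof -
  have "{} \<in> alex_dual m K"
    using full_simplex_notin[OF assms] unfolding alex_dual_def by simp
  moreover have "G \<in> alex_dual m K" if "F \<in> alex_dual m K" "G \<subseteq> F" for F G
    using that simplicial_complex_onD(3)[OF assms(1), of "{1..m} - G" "{1..m} - F"]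
    unfolding alex_dual_def by auto
  ultimately show "simplicial_complex_on m (alex_dual m K)"
    unfolding simplicial_complex_on_def alex_dual_def by blast
  show "alex_dual m K \<noteq> Pow {1..m}"
  proof
    assume "alex_dual m K = Pow {1..m}"
    then have "{1..m} \<in> alex_dual m K" by blast
    then show False using simplicial_complex_onD(1)[OF assms(1)] unfolding alex_dual_def by simp
  qed
qed

lemma sum_set_decomp: "H = Inl ` {i. Inl i \<in> H} \<union> Inr ` {j. Inr j \<in> H}"
  by (auto intro: sum.exhaust)

lemma Collect_Inl_Inr_image [simp]:
  "{i. Inl i \<in> Inl ` L \<union> Inr ` R} = L" "{j. Inr j \<in> Inl ` L \<union> Inr ` R} = R"
  by auto

lemma Inl_Inr_image_eq_iff:
  "Inl ` L \<union> Inr ` R = Inl ` L' \<union> Inr ` R' \<longleftrightarrow> L = L' \<and> R = R'"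
  by (metis Collect_Inl_Inr_image)

lemma sum_set_eqI:
  assumes "\<And>L R. Inl ` L \<union> Inr ` R \<in> A \<longleftrightarrow> Inl ` L \<union> Inr ` R \<in> B"
  shows "A = B"
proof (rule set_eqI)
  fix H :: "('a + 'b) set"
  have "H = Inl ` {i. Inl i \<in> H} \<union> Inr ` {j. Inr j \<in> H}" by (rule sum_set_decomp)
  then show "H \<in> A \<longleftrightarrow> H \<in> B" using assms by metis
qed

lemma Inl_Inr_mem_bier_iff:
  "Inl ` L \<union> Inr ` R \<in> bier m K \<longleftrightarrow> L \<in> K \<and> R \<in> alex_dual m K \<and> L \<inter> R = {}"
  unfolding bier_def mem_Collect_eq Inl_Inr_image_eq_iff by blast

lemma Inl_mem_vertices_bier: "Inl i \<in> vertices (bier m K) \<longleftrightarrow> {i} \<in> K \<and> {} \<in> alex_dual m K"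
  using Inl_Inr_mem_bier_iff[of "{i}" "{}" m K] by (simp add: vertices_def)

lemma Inr_mem_vertices_bier: "Inr j \<in> vertices (bier m K) \<longleftrightarrow> {} \<in> K \<and> {j} \<in> alex_dual m K"
  using Inl_Inr_mem_bier_iff[of "{}" "{j}" m K] by (simp add: vertices_def)

lemma Inr_Inr_mem_bier: "{Inr j, Inr k} \<in> bier m K \<longleftrightarrow> {} \<in> K \<and> {j, k} \<in> alex_dual m K"
  using Inl_Inr_mem_bier_iff[of "{}" "{j, k}" m K] by simp

lemma Inl_Inr_mem_bier: "{Inl i, Inr j} \<in> bier m K \<longleftrightarrow> {i} \<in> K \<and> {j} \<in> alex_dual m K \<and> i \<noteq> j"
  using Inl_Inr_mem_bier_iff[of "{i}" "{j}" m K] by (simp add: insert_commute eq_commute)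

lemma mirror_Inl_Inr_image [simp]: "mirror ` (Inl ` L \<union> Inr ` R) = Inl ` R \<union> Inr ` L"
  by (auto simp: image_Un image_image)

lemma image_mirror_mirror [simp]: "mirror ` mirror ` H = H"
  by (simp add: image_image)

lemma mem_image_mirror_iff: "H \<in> (`) mirror ` A \<longleftrightarrow> mirror ` H \<in> A"
proof
  assume "H \<in> (`) mirror ` A"
  then show "mirror ` H \<in> A" by auto
next
  assume "mirror ` H \<in> A"
  then have "mirror ` mirror ` H \<in> (`) mirror ` A" by (rule imageI)
  then show "H \<in> (`) mirror ` A" by simp
qed

lemma bier_alex_dual:
  assumes "simplicial_complex_on m K"
  shows "bier m (alex_dual m K) = (`) mirror ` bier m K"
proof (rule sum_set_eqI)
  fix L R
  show "Inl ` L \<union> Inr ` R \<in> bier m (alex_dual m K) \<longleftrightarrow> Inl ` L \<union> Inr ` R \<in> (`) mirror ` bier m K"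
    unfolding mem_image_mirror_iff mirror_Inl_Inr_image Inl_Inr_mem_bier_iff
      alex_dual_alex_dual[OF assms] by blast
qed

lemma colorable_bier_alex_dual:
  assumes "simplicial_complex_on m K" and "colorable (bier m K) n"
  shows "colorable (bier m (alex_dual m K)) n"
proof (rule colorable_if_inj_simplicial_map[OF _ _ assms(2)])
  show "inj_on mirror (\<Union>(bier m (alex_dual m K)))"
    using inj_mirror by (rule inj_on_subset) simp
  show "\<forall>H\<in>bier m (alex_dual m K). mirror ` H \<in> bier m K"
    unfolding bier_alex_dual[OF assms(1)] by (simp add: image_image)
qed

lemma colorable_bier:
  assumes "simplicial_complex_on m K"
  shows "colorable (bier m K) (2 * m + 2)"
proof (rule colorable_if_inj)
  show "inj (case_sum (\<lambda>i::nat. 2 * i) (\<lambda>i. 2 * i + 1))"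
    by (rule injI) (auto split: sum.splits, presburger+)
  show "\<forall>v\<in>vertices (bier m K). case_sum (\<lambda>i. 2 * i) (\<lambda>i. 2 * i + 1) v < 2 * m + 2"
  proof
    fix v assume v: "v \<in> vertices (bier m K)"
    show "case_sum (\<lambda>i. 2 * i) (\<lambda>i. 2 * i + 1) v < 2 * m + 2"
    proof (cases v)
      case (Inl i)
      then have "{i} \<in> K" using v by (simp add: Inl_mem_vertices_bier)
      then have "{i} \<subseteq> {1..m}" by (rule simplicial_complex_onD(2)[OF assms])
      then show ?thesis using Inl by simp
    next
      case (Inr i)
      then have "{i} \<subseteq> {1..m}" using v by (simp add: Inr_mem_vertices_bier alex_dual_def)
      then show ?thesis using Inr by simp
    qed
  qed
qed

section \<open>The exceptional complexes\<close>

definition exceptional_complex :: "nat \<Rightarrow> nat set set \<Rightarrow> bool" where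
  "exceptional_complex m K \<longleftrightarrow>
     (\<exists>p\<in>{1..m}. K = Pow ({1..m} - {p})) \<or>
     (\<exists>p\<in>{1..m}. \<exists>q\<in>{1..m}. p \<noteq> q \<and>
        (K = Pow ({1..m} - {p, q}) \<or> K = Pow ({1..m} - {p}) \<union> Pow ({1..m} - {q})))"

lemma simplicial_complex_on_Pow: "A \<subseteq> {1..m} \<Longrightarrow> simplicial_complex_on m (Pow A)"
  unfolding simplicial_complex_on_def by auto

lemma alex_dual_Pow_diff_singleton:
  "p \<in> {1..m} \<Longrightarrow> alex_dual m (Pow ({1..m} - {p})) = Pow ({1..m} - {p})"
  unfolding alex_dual_def by auto

lemma alex_dual_Pow_diff_doubleton:
  "p \<in> {1..m} \<Longrightarrow> q \<in> {1..m} \<Longrightarrow>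
     alex_dual m (Pow ({1..m} - {p, q})) = Pow ({1..m} - {p}) \<union> Pow ({1..m} - {q})"
  unfolding alex_dual_def by auto

lemma exceptional_complexI:
  "p \<in> {1..m} \<Longrightarrow> exceptional_complex m (Pow ({1..m} - {p}))"
  "p \<in> {1..m} \<Longrightarrow> q \<in> {1..m} \<Longrightarrow> p \<noteq> q \<Longrightarrow> exceptional_complex m (Pow ({1..m} - {p, q}))"
  "p \<in> {1..m} \<Longrightarrow> q \<in> {1..m} \<Longrightarrow> p \<noteq> q \<Longrightarrow>
     exceptional_complex m (Pow ({1..m} - {p}) \<union> Pow ({1..m} - {q}))"
  unfolding exceptional_complex_def by blast+

lemma exceptional_complexE:
  assumes "exceptional_complex m K"
  obtains (one_ghost) p where "p \<in> {1..m}" "K = Pow ({1..m} - {p})"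
    | (two_ghosts) p q where "p \<in> {1..m}" "q \<in> {1..m}" "p \<noteq> q" "K = Pow ({1..m} - {p, q})"
    | (two_facets) p q where "p \<in> {1..m}" "q \<in> {1..m}" "p \<noteq> q"
        "K = Pow ({1..m} - {p}) \<union> Pow ({1..m} - {q})"
  using assms unfolding exceptional_complex_def by blast

lemma exceptional_complex_alex_dual:
  assumes "exceptional_complex m K"
  shows "exceptional_complex m (alex_dual m K)"
  using assms
proof (cases rule: exceptional_complexE)
  case (one_ghost p)
  show ?thesis
    unfolding one_ghost(2) alex_dual_Pow_diff_singleton[OF one_ghost(1)] by (rule exceptional_complexI(1)[OF one_ghost(1)])
next
  case (two_ghosts p q)
  show ?thesis
    unfolding two_ghosts(4) alex_dual_Pow_diff_doubleton[OF two_ghosts(1,2)] by (rule exceptional_complexI(3)[OF two_ghosts(1-3)])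
next
  case (two_facets p q)
  have "simplicial_complex_on m (Pow ({1..m} - {p, q}))" by (rule simplicial_complex_on_Pow) auto
  from alex_dual_alex_dual[OF this] have "alex_dual m K = Pow ({1..m} - {p, q})"
    unfolding two_facets(4) alex_dual_Pow_diff_doubleton[OF two_facets(1,2)] .
  then show ?thesis using exceptional_complexI(2)[OF two_facets(1-3)] by simp
qed

text \<open>The antipodal map of \<open>Bier(\<Delta>\<^bsub>[m] - {p, q}\<^esub>)\<close>.\<close>
definition antipode :: "nat \<Rightarrow> nat \<Rightarrow> nat + nat \<Rightarrow> nat + nat" where
  "antipode p q x = (case x of
      Inl i \<Rightarrow> if i = p then Inl q else if i = q then Inl p else Inr i
    | Inr i \<Rightarrow> if i = p then Inr q else if i = q then Inr p else Inl i)"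

lemma antipode_simps [simp]:
  "antipode p q (Inl p) = Inl q" "antipode p q (Inr p) = Inr q"
  "antipode p q (Inl q) = Inl p" "antipode p q (Inr q) = Inr p"
  "i \<noteq> p \<Longrightarrow> i \<noteq> q \<Longrightarrow> antipode p q (Inl i) = Inr i"
  "i \<noteq> p \<Longrightarrow> i \<noteq> q \<Longrightarrow> antipode p q (Inr i) = Inl i"
  by (simp_all add: antipode_def)

lemma Inl_Inr_mem_cross_iff:
  "Inl ` L \<union> Inr ` R \<in> cross (Inl ` A \<union> Inr ` B) b \<longleftrightarrow>
     L \<subseteq> A \<and> R \<subseteq> B \<and> (\<forall>i\<in>L. b (Inl i) \<notin> Inl ` L \<union> Inr ` R) \<and>
     (\<forall>j\<in>R. b (Inr j) \<notin> Inl ` L \<union> Inr ` R)"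
  unfolding cross_def by auto

lemma bier_Pow_diff_singleton:
  assumes "p \<in> {1..m}"
  shows "bier m (Pow ({1..m} - {p})) = cross (Inl ` ({1..m} - {p}) \<union> Inr ` ({1..m} - {p})) mirror"
proof (rule sum_set_eqI)
  fix L R :: "nat set"
  show "Inl ` L \<union> Inr ` R \<in> bier m (Pow ({1..m} - {p})) \<longleftrightarrow>
      Inl ` L \<union> Inr ` R \<in> cross (Inl ` ({1..m} - {p}) \<union> Inr ` ({1..m} - {p})) mirror"
    unfolding Inl_Inr_mem_bier_iff Inl_Inr_mem_cross_iff alex_dual_Pow_diff_singleton[OF assms]
    by auto
qed

lemma bier_Pow_diff_doubleton:
  assumes "p \<in> {1..m}" "q \<in> {1..m}" "p \<noteq> q"
  shows "bier m (Pow ({1..m} - {p, q})) = cross (Inl ` ({1..m} - {p, q}) \<union> Inr ` {1..m}) (antipode p q)"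
proof (rule sum_set_eqI)
  fix L R :: "nat set"
  let ?H = "Inl ` L \<union> Inr ` R"
  have dual: "alex_dual m (Pow ({1..m} - {p, q})) = {R. R \<subseteq> {1..m} \<and> \<not> {p, q} \<subseteq> R}"
    using assms unfolding alex_dual_def by auto
  have left: "(\<forall>i\<in>L. antipode p q (Inl i) \<notin> ?H) \<longleftrightarrow> L \<inter> R = {}" if "L \<subseteq> {1..m} - {p, q}"
  proof -
    have "antipode p q (Inl i) = Inr i" if "i \<in> L" for i
      using \<open>L \<subseteq> {1..m} - {p, q}\<close> that by (intro antipode_simps(5)) auto
    then show ?thesis by auto
  qed
  have right: "(\<forall>j\<in>R. antipode p q (Inr j) \<notin> ?H) \<longleftrightarrow> \<not> {p, q} \<subseteq> R" if "L \<inter> R = {}"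
  proof
    assume "\<forall>j\<in>R. antipode p q (Inr j) \<notin> ?H"
    then show "\<not> {p, q} \<subseteq> R" by auto
  next
    assume pq: "\<not> {p, q} \<subseteq> R"
    show "\<forall>j\<in>R. antipode p q (Inr j) \<notin> ?H"
    proof
      fix j assume "j \<in> R"
      then consider "j = p" "q \<notin> R" | "j = q" "p \<notin> R" | "j \<noteq> p" "j \<noteq> q" "j \<notin> L"
        using pq \<open>L \<inter> R = {}\<close> by blast
      then show "antipode p q (Inr j) \<notin> ?H" by cases auto
    qed
  qed
  show "?H \<in> bier m (Pow ({1..m} - {p, q})) \<longleftrightarrow>
      ?H \<in> cross (Inl ` ({1..m} - {p, q}) \<union> Inr ` {1..m}) (antipode p q)"
    unfolding Inl_Inr_mem_bier_iff Inl_Inr_mem_cross_iff dual Pow_iff mem_Collect_eq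
    using left right by meson
qed

lemma antipodal_image:
  assumes "inj_on f W" and "\<forall>x\<in>W. f (b x) = a (f x)" and "antipodal W b"
  shows "antipodal (f ` W) a"
  unfolding antipodal_def
proof
  fix y assume "y \<in> f ` W"
  then obtain x where x: "x \<in> W" "y = f x" by blast
  then have bx: "b x \<in> W" "b x \<noteq> x" "b (b x) = x" using assms(3) by (auto simp: antipodal_def)
  have "a y = f (b x)" "a (a y) = f (b (b x))" using assms(2) x bx(1) by simp_all
  moreover have "f (b x) \<noteq> f x" using inj_onD[OF assms(1)] x(1) bx(1,2) by blast
  ultimately show "a y \<in> f ` W \<and> a y \<noteq> y \<and> a (a y) = y" using x bx by simp
qed

lemma mirror_antipode: "mirror (antipode p q x) = antipode p q (mirror x)"
  by (cases x) (simp_all add: antipode_def)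

lemma antipodal_antipode:
  assumes "p \<in> {1..m}" "q \<in> {1..m}" "p \<noteq> q"
  shows "antipodal (Inl ` ({1..m} - {p, q}) \<union> Inr ` {1..m}) (antipode p q)"
  unfolding antipodal_def
proof
  fix x assume "x \<in> Inl ` ({1..m} - {p, q}) \<union> Inr ` {1..m}"
  then consider i where "x = Inl i" "i \<in> {1..m}" "i \<noteq> p" "i \<noteq> q" | "x = Inr p" | "x = Inr q"
    | i where "x = Inr i" "i \<in> {1..m}" "i \<noteq> p" "i \<noteq> q"
    by blast
  then show "antipode p q x \<in> Inl ` ({1..m} - {p, q}) \<union> Inr ` {1..m} \<and> antipode p q x \<noteq> x \<and>
      antipode p q (antipode p q x) = x"
    using assms by cases auto
qed

lemma bier_exceptional_eq_cross:
  assumes "exceptional_complex m K"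
  shows "\<exists>W b. finite W \<and> antipodal W b \<and> card W = 2 * (m - 1) \<and> bier m K = cross W b"
  using assms
proof (cases rule: exceptional_complexE)
  case (one_ghost p)
  let ?W = "Inl ` ({1..m} - {p}) \<union> Inr ` ({1..m} - {p})"
  show ?thesis
  proof (intro exI conjI)
    show "finite ?W" by simp
    show "antipodal ?W mirror" by (rule antipodal_mirror)
    show "card ?W = 2 * (m - 1)" using one_ghost by (simp add: card_Inl_Inr_image)
    show "bier m K = cross ?W mirror" unfolding one_ghost(2) by (rule bier_Pow_diff_singleton[OF one_ghost(1)])
  qed
next
  case (two_ghosts p q)
  let ?W = "Inl ` ({1..m} - {p, q}) \<union> Inr ` {1..m}"
  show ?thesis
  proof (intro exI conjI)
    show "finite ?W" by simp
    show "antipodal ?W (antipode p q)" by (rule antipodal_antipode[OF two_ghosts(1-3)])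
    show "card ?W = 2 * (m - 1)" using two_ghosts by (simp add: card_Inl_Inr_image card_Diff_subset)
    show "bier m K = cross ?W (antipode p q)" unfolding two_ghosts(4) by (rule bier_Pow_diff_doubleton[OF two_ghosts(1-3)])
  qed
next
  case (two_facets p q)
  \<comment> \<open>\<open>K\<close> is the Alexander dual of \<open>\<Delta>\<^bsub>[m] - {p, q}\<^esub>\<close>, so its Bier sphere is the mirror image
    of the previous one.\<close>
  let ?W = "Inl ` ({1..m} - {p, q}) \<union> Inr ` {1..m}"
  have sc: "simplicial_complex_on m (Pow ({1..m} - {p, q}))" by (rule simplicial_complex_on_Pow) auto
  have inj: "inj_on mirror ?W" using inj_mirror by (rule inj_on_subset) simp
  have comm: "\<forall>x\<in>?W. mirror (antipode p q x) = antipode p q (mirror x)" by (simp add: mirror_antipode)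
  note antipodal = antipodal_antipode[OF two_facets(1-3)]
  show ?thesis
  proof (intro exI conjI)
    show "finite (mirror ` ?W)" by simp
    show "antipodal (mirror ` ?W) (antipode p q)" by (rule antipodal_image[OF inj comm antipodal])
    show "card (mirror ` ?W) = 2 * (m - 1)"
      using two_facets card_image[OF inj] by (simp add: card_Inl_Inr_image card_Diff_subset)
    have "bier m K = bier m (alex_dual m (Pow ({1..m} - {p, q})))"
      unfolding two_facets(4) alex_dual_Pow_diff_doubleton[OF two_facets(1,2)] ..
    also have "\<dots> = (`) mirror ` cross ?W (antipode p q)"
      unfolding bier_alex_dual[OF sc] bier_Pow_diff_doubleton[OF two_facets(1-3)] ..
    also have "\<dots> = cross (mirror ` ?W) (antipode p q)"
      by (rule image_cross[OF inj_on_imp_bij_betw[OF inj] comm antipodal])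
    finally show "bier m K = cross (mirror ` ?W) (antipode p q)" .
  qed
qed

lemma colorable_bier_exceptional:
  assumes "exceptional_complex m K"
  shows "colorable (bier m K) (m - 1)"
proof -
  obtain W b where W: "finite W" "antipodal W b" "card W = 2 * (m - 1)" "bier m K = cross W b"
    using bier_exceptional_eq_cross[OF assms] by blast
  show ?thesis unfolding W(4) by (rule colorable_cross[OF W(1-3)])
qed

lemma complex_iso_bier_exceptional:
  assumes "m \<ge> 3" and "exceptional_complex m K"
  shows "complex_iso (bier m K) ((suspension ^^ (m - 3)) Z4)"
proof -
  obtain W b where W: "finite W" "antipodal W b" "card W = 2 * (m - 1)" "bier m K = cross W b"
    using bier_exceptional_eq_cross[OF assms(2)] by blast
  obtain V a where V: "finite V" "antipodal V a" "card V = 2 * (m - 3) + 4"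
    "(suspension ^^ (m - 3)) Z4 = cross V a"
    using iterated_suspension_Z4_eq_cross by blast
  have "card W = card V" using W(3) V(3) assms(1) by simp
  from complex_iso_cross[OF W(1,2) V(1,2) this] show ?thesis unfolding W(4) V(4) .
qed

section \<open>Relabelling the vertices\<close>

lemma image_Pow_diff:
  assumes "\<sigma> permutes {1..m}"
  shows "(`) ((`) \<sigma>) (Pow ({1..m} - X)) = Pow ({1..m} - \<sigma> ` X)"
proof (rule image_Pow_surj)
  show "\<sigma> ` ({1..m} - X) = {1..m} - \<sigma> ` X"
    using image_set_diff[OF permutes_inj[OF assms]] permutes_image[OF assms] by simp
qed

lemma exceptional_complex_image:
  assumes \<sigma>: "\<sigma> permutes {1..m}" and "exceptional_complex m K"
  shows "exceptional_complex m ((`) ((`) \<sigma>) K)"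
proof -
  have in_range: "\<sigma> p \<in> {1..m}" if "p \<in> {1..m}" for p
    using permutes_in_image[OF \<sigma>] that by blast
  have distinct: "\<sigma> p \<noteq> \<sigma> q" if "p \<noteq> q" for p q
    using permutes_inj[OF \<sigma>] that by (auto dest: injD)
  from assms(2) show ?thesis
  proof (cases rule: exceptional_complexE)
    case (one_ghost p)
    have "(`) ((`) \<sigma>) K = Pow ({1..m} - {\<sigma> p})"
      unfolding one_ghost(2) image_Pow_diff[OF \<sigma>] by simp
    then show ?thesis using exceptional_complexI(1)[OF in_range[OF one_ghost(1)]] by simp
  next
    case (two_ghosts p q)
    have "(`) ((`) \<sigma>) K = Pow ({1..m} - {\<sigma> p, \<sigma> q})"
      unfolding two_ghosts(4) image_Pow_diff[OF \<sigma>] by simp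
    then show ?thesis
      using exceptional_complexI(2)[OF in_range[OF two_ghosts(1)] in_range[OF two_ghosts(2)] distinct[OF two_ghosts(3)]]
      by simp
  next
    case (two_facets p q)
    have "(`) ((`) \<sigma>) K = Pow ({1..m} - {\<sigma> p}) \<union> Pow ({1..m} - {\<sigma> q})"
      unfolding two_facets(4) image_Un image_Pow_diff[OF \<sigma>] by simp
    then show ?thesis
      using exceptional_complexI(3)[OF in_range[OF two_facets(1)] in_range[OF two_facets(2)]
          distinct[OF two_facets(3)]]
      by simp
  qed
qed

lemma image_image_inv_permutes:
  assumes "\<sigma> permutes S"
  shows "(`) ((`) (inv \<sigma>)) ((`) ((`) \<sigma>) K) = K"
  by (simp add: image_comp permutes_inv_o(2)[OF assms])

lemma exists_permutes_two_points:
  assumes "p \<in> S" "q \<in> S" "p' \<in> S" "q' \<in> S" "p \<noteq> q" "p' \<noteq> q'"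
  shows "\<exists>\<sigma>. \<sigma> permutes S \<and> \<sigma> p = p' \<and> \<sigma> q = q'"
proof -
  define r where "r = transpose p p' q"
  have r: "r \<in> S" "r \<noteq> p'" using assms by (auto simp: r_def transpose_def)
  have "transpose r q' \<circ> transpose p p' permutes S"
    using assms r by (intro permutes_compose permutes_swap_id) simp_all
  moreover have "(transpose r q' \<circ> transpose p p') p = p'" using r assms(6) by simp
  moreover have "(transpose r q' \<circ> transpose p p') q = q'" by (simp add: r_def)
  ultimately show ?thesis by blast
qed

text \<open>The three complexes of the theorem are the exceptional complexes with \<open>p = m\<close> and \<open>q = m - 1\<close>.\<close>
lemma exceptional_complex_iff_normal_form:
  assumes "m \<ge> 3"
  shows "exceptional_complex m K \<longleftrightarrow>
    (\<exists>\<sigma>. \<sigma> permutes {1..m} \<and>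
       ((`) ((`) \<sigma>) K = Pow {1..m-1} \<or>
        (`) ((`) \<sigma>) K = Pow {1..m-2} \<or>
        (`) ((`) \<sigma>) K = Pow {1..m-1} \<union> Pow ({1..m-2} \<union> {m})))"
proof -
  have "{1..m-1} = {1..m} - {m}" "{1..m-2} = {1..m} - {m, m - 1}"
    "{1..m-2} \<union> {m} = {1..m} - {m - 1}"
    using assms by auto
  then have N1: "Pow {1..m-1} = Pow ({1..m} - {m})"
    and N2: "Pow {1..m-2} = Pow ({1..m} - {m, m - 1})"
    and N3: "Pow {1..m-1} \<union> Pow ({1..m-2} \<union> {m}) = Pow ({1..m} - {m}) \<union> Pow ({1..m} - {m - 1})"
    by simp_all
  have m: "m \<in> {1..m}" "m - 1 \<in> {1..m}" "m \<noteq> m - 1" using assms by auto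
  have normal_exceptional: "exceptional_complex m N"
    if "N = Pow {1..m-1} \<or> N = Pow {1..m-2} \<or> N = Pow {1..m-1} \<union> Pow ({1..m-2} \<union> {m})" for N
    using that exceptional_complexI(1)[OF m(1)] exceptional_complexI(2,3)[OF m]
    unfolding N3 unfolding N1 N2 by blast
  show ?thesis
  proof
    assume "exceptional_complex m K"
    then show "\<exists>\<sigma>. \<sigma> permutes {1..m} \<and>
       ((`) ((`) \<sigma>) K = Pow {1..m-1} \<or>
        (`) ((`) \<sigma>) K = Pow {1..m-2} \<or>
        (`) ((`) \<sigma>) K = Pow {1..m-1} \<union> Pow ({1..m-2} \<union> {m}))"
    proof (cases rule: exceptional_complexE)
      case (one_ghost p)
      have \<sigma>: "transpose p m permutes {1..m}" using one_ghost(1) m(1) by (rule permutes_swap_id)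
      have "(`) ((`) (transpose p m)) K = Pow {1..m-1}"
        unfolding one_ghost(2) image_Pow_diff[OF \<sigma>] N1 by simp
      then show ?thesis using \<sigma> by blast
    next
      case (two_ghosts p q)
      obtain \<sigma> where \<sigma>: "\<sigma> permutes {1..m}" "\<sigma> p = m" "\<sigma> q = m - 1"
        using exists_permutes_two_points[OF two_ghosts(1,2) m(1,2) two_ghosts(3) m(3)] by blast
      have "(`) ((`) \<sigma>) K = Pow {1..m-2}"
        unfolding two_ghosts(4) image_Pow_diff[OF \<sigma>(1)] N2 using \<sigma>(2,3) by simp
      then show ?thesis using \<sigma>(1) by blast
    next
      case (two_facets p q)
      obtain \<sigma> where \<sigma>: "\<sigma> permutes {1..m}" "\<sigma> p = m" "\<sigma> q = m - 1"
        using exists_permutes_two_points[OF two_facets(1,2) m(1,2) two_facets(3) m(3)] by blast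
      have "(`) ((`) \<sigma>) K = Pow {1..m-1} \<union> Pow ({1..m-2} \<union> {m})"
        unfolding two_facets(4) image_Un image_Pow_diff[OF \<sigma>(1)] N3 using \<sigma>(2,3) by simp
      then show ?thesis using \<sigma>(1) by blast
    qed
  next
    assume "\<exists>\<sigma>. \<sigma> permutes {1..m} \<and>
       ((`) ((`) \<sigma>) K = Pow {1..m-1} \<or>
        (`) ((`) \<sigma>) K = Pow {1..m-2} \<or>
        (`) ((`) \<sigma>) K = Pow {1..m-1} \<union> Pow ({1..m-2} \<union> {m}))"
    then obtain \<sigma> where \<sigma>: "\<sigma> permutes {1..m}"
      and "exceptional_complex m ((`) ((`) \<sigma>) K)"
      using normal_exceptional by blast
    from exceptional_complex_image[OF permutes_inv[OF \<sigma>] this(2)]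
    show "exceptional_complex m K" unfolding image_image_inv_permutes[OF \<sigma>] .
  qed
qed

section \<open>The lower bound\<close>

lemma simplicial_complex_eq_Pow:
  assumes "simplicial_complex_on m K" and "A \<in> K" and "\<forall>v\<in>{1..m} - A. {v} \<notin> K"
  shows "K = Pow A"
proof (intro equalityI subsetI)
  fix F assume F: "F \<in> K"
  have "v \<in> A" if "v \<in> F" for v
    using simplicial_complex_onD(3)[OF assms(1) F, of "{v}"] simplicial_complex_onD(2)[OF assms(1) F]
      assms(3) that by blast
  then show "F \<in> Pow A" by blast
qed (use simplicial_complex_onD(3)[OF assms(1,2)] in blast)

lemma alex_dual_ghost:
  assumes "simplicial_complex_on m K" and "p \<in> {1..m}" and "{p} \<notin> K" and "J \<subseteq> {1..m} - {p}"
  shows "J \<in> alex_dual m K"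
  using assms simplicial_complex_onD(3)[OF assms(1), of "{1..m} - J" "{p}"]
  unfolding alex_dual_def by auto

lemma clique_bier_ghost:
  assumes "simplicial_complex_on m K" and "p \<in> {1..m}" and "{p} \<notin> K"
  shows "clique (bier m K) (Inr ` ({1..m} - {p}))"
  unfolding clique_def
proof (intro conjI subsetI ballI impI)
  fix x :: "nat + nat" assume "x \<in> Inr ` ({1..m} - {p})"
  then obtain j where "j \<in> {1..m} - {p}" "x = Inr j" by blast
  then show "x \<in> vertices (bier m K)"
    using alex_dual_ghost[OF assms, of "{j}"] simplicial_complex_onD(1)[OF assms(1)]
    by (simp add: Inr_mem_vertices_bier)
next
  fix u v :: "nat + nat" assume "u \<in> Inr ` ({1..m} - {p})" "v \<in> Inr ` ({1..m} - {p})"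
  then obtain j k where "j \<in> {1..m} - {p}" "k \<in> {1..m} - {p}" "u = Inr j" "v = Inr k" by blast
  then show "{u, v} \<in> bier m K"
    using alex_dual_ghost[OF assms, of "{j, k}"] simplicial_complex_onD(1)[OF assms(1)]
    by (simp add: Inr_Inr_mem_bier)
qed

lemma colorable_bier_ghost_ge:
  assumes "simplicial_complex_on m K" and "p \<in> {1..m}" and "{p} \<notin> K" and "colorable (bier m K) n"
  shows "m - 1 \<le> n"
proof -
  have "card (Inr ` ({1..m} - {p}) :: (nat + nat) set) = m - 1" using assms(2) by (simp add: card_image)
  then show ?thesis using colorable_card_clique_le[OF assms(4) clique_bier_ghost[OF assms(1-3)]] by linarith
qed

text \<open>In an \<open>(m - 1)\<close>-coloring the clique \<open>Inr ` ([m] - {p})\<close> uses every color once, and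
  \<open>Inl i\<close> is adjacent to all of it except \<open>Inr i\<close>.\<close>
lemma coloring_bier_ghost:
  assumes sc: "simplicial_complex_on m K" and "K \<noteq> Pow {1..m}"
    and p: "p \<in> {1..m}" "{p} \<notin> K" and c: "coloring (bier m K) (m - 1) c"
  shows "v \<in> vertices (bier m K) \<Longrightarrow> \<exists>k\<in>{1..m} - {p}. c v = c (Inr k)"
    and "i \<in> {1..m} - {p} \<Longrightarrow> {i} \<in> K \<Longrightarrow> c (Inl i) = c (Inr i)"
proof -
  have "card (Inr ` ({1..m} - {p}) :: (nat + nat) set) = m - 1" using p by (simp add: card_image)
  then have onto: "c ` Inr ` ({1..m} - {p}) = {..<m - 1}"
    using coloring_image_clique_eq[OF c clique_bier_ghost[OF sc p]] by blast
  show match: "\<exists>k\<in>{1..m} - {p}. c v = c (Inr k)" if "v \<in> vertices (bier m K)" for v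
  proof -
    have "c v \<in> c ` Inr ` ({1..m} - {p})" using c that unfolding onto coloring_def by blast
    then show ?thesis by blast
  qed
  assume i: "i \<in> {1..m} - {p}" "{i} \<in> K"
  have "{} \<in> alex_dual m K" using full_simplex_notin[OF sc assms(2)] by (simp add: alex_dual_def)
  then have "Inl i \<in> vertices (bier m K)" using i(2) by (simp add: Inl_mem_vertices_bier)
  then obtain k where k: "k \<in> {1..m} - {p}" "c (Inl i) = c (Inr k)" using match by blast
  show "c (Inl i) = c (Inr i)"
  proof (rule ccontr)
    assume "c (Inl i) \<noteq> c (Inr i)"
    then have "k \<noteq> i" using k(2) by auto
    moreover have "{k} \<in> alex_dual m K" using alex_dual_ghost[OF sc p, of "{k}"] k(1) by simp
    ultimately have "{Inl i, Inr k} \<in> bier m K" using i(2) by (simp add: Inl_Inr_mem_bier)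
    then show False using c k(2) unfolding coloring_def by blast
  qed
qed

lemma exceptional_of_ghost_colorable:
  assumes sc: "simplicial_complex_on m K" and K: "K \<noteq> Pow {1..m}"
    and p: "p \<in> {1..m}" "{p} \<notin> K" and "colorable (bier m K) (m - 1)"
  shows "exceptional_complex m K"
proof -
  obtain c where c: "coloring (bier m K) (m - 1) c"
    using assms(5) unfolding colorable_def by blast
  note match = coloring_bier_ghost(1)[OF sc K p c] and diagonal = coloring_bier_ghost(2)[OF sc K p c]
  show ?thesis
  proof (cases "{1..m} - {p} \<in> K")
    case True
    then have "K = Pow ({1..m} - {p})" using p(2) by (intro simplicial_complex_eq_Pow[OF sc]) auto
    then show ?thesis using exceptional_complexI(1)[OF p(1)] by simp
  next
    case False
    \<comment> \<open>Then \<open>p'\<close> is a vertex; the clique vertex \<open>k'\<close> of its color is not adjacent to it,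
      and \<open>k\<close> turns out to be a second ghost vertex.\<close>
    then have "{p} \<in> alex_dual m K" using p(1) by (simp add: alex_dual_def)
    then have "Inr p \<in> vertices (bier m K)"
      using simplicial_complex_onD(1)[OF sc] by (simp add: Inr_mem_vertices_bier)
    then obtain k where k: "k \<in> {1..m} - {p}" "c (Inr p) = c (Inr k)" using match by blast
    have "{Inr p, Inr k} \<notin> bier m K" using c k unfolding coloring_def by auto
    then have "{1..m} - {p, k} \<in> K"
      using simplicial_complex_onD(1)[OF sc] p(1) k(1) by (auto simp: Inr_Inr_mem_bier alex_dual_def)
    moreover have "{k} \<notin> K"
    proof
      assume "{k} \<in> K"
      then have "{Inl k, Inr p} \<in> bier m K" using \<open>{p} \<in> alex_dual m K\<close> k(1) by (auto simp: Inl_Inr_mem_bier)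
      moreover have "c (Inl k) = c (Inr p)" using diagonal[OF k(1) \<open>{k} \<in> K\<close>] k(2) by simp
      ultimately show False using c k(1) unfolding coloring_def by auto
    qed
    ultimately have "K = Pow ({1..m} - {p, k})" using p(2) by (intro simplicial_complex_eq_Pow[OF sc]) auto
    then show ?thesis using exceptional_complexI(2)[OF p(1), of k] k(1) by auto
  qed
qed

lemma ghost_vertex_of_f0_less:
  assumes "vertices L \<subseteq> {1..m}" and "f0 L < m"
  shows "\<exists>p\<in>{1..m}. {p} \<notin> L"
proof (rule ccontr)
  assume "\<not> ?thesis"
  then have "vertices L = {1..m}" using assms(1) unfolding vertices_def by auto
  then show False using assms(2) unfolding f0_def by simp
qed

lemma ghost_vertex_cases:
  assumes "simplicial_complex_on m K" and "f0 K < m \<or> f0 (alex_dual m K) < m"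
  obtains (primal) p where "p \<in> {1..m}" "{p} \<notin> K"
    | (dual) p where "p \<in> {1..m}" "{p} \<notin> alex_dual m K"
proof -
  have "vertices K \<subseteq> {1..m}" "vertices (alex_dual m K) \<subseteq> {1..m}"
    using simplicial_complex_onD(2)[OF assms(1)] unfolding vertices_def alex_dual_def by auto
  then show ?thesis using assms(2) ghost_vertex_of_f0_less that by metis
qed

lemma colorable_bier_ge:
  assumes "simplicial_complex_on m K" and "K \<noteq> Pow {1..m}"
    and "f0 K < m \<or> f0 (alex_dual m K) < m" and "colorable (bier m K) n"
  shows "m - 1 \<le> n"
  using assms(1,3)
proof (cases rule: ghost_vertex_cases)
  case (primal p)
  then show ?thesis using colorable_bier_ghost_ge[OF assms(1) _ _ assms(4)] by blast
next
  case (dual p)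
  then show ?thesis
    using colorable_bier_ghost_ge[OF simplicial_complex_on_alex_dual(1)[OF assms(1,2)]
        _ _ colorable_bier_alex_dual[OF assms(1,4)]]
    by blast
qed

lemma exceptional_of_colorable_bier:
  assumes "simplicial_complex_on m K" and "K \<noteq> Pow {1..m}"
    and "f0 K < m \<or> f0 (alex_dual m K) < m" and "colorable (bier m K) (m - 1)"
  shows "exceptional_complex m K"
  using assms(1,3)
proof (cases rule: ghost_vertex_cases)
  case (primal p)
  then show ?thesis using exceptional_of_ghost_colorable[OF assms(1,2) _ _ assms(4)] by blast
next
  case (dual p)
  have "exceptional_complex m (alex_dual m K)"
    using exceptional_of_ghost_colorable[OF simplicial_complex_on_alex_dual[OF assms(1,2)] dual
        colorable_bier_alex_dual[OF assms(1,4)]] .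
  then show ?thesis
    using exceptional_complex_alex_dual alex_dual_alex_dual[OF assms(1)] by metis
qed

theorem mainTheorem7:
  fixes m :: nat and K :: "nat set set"
  assumes "m \<ge> 3"
    and "simplicial_complex_on m K"
    and "K \<noteq> Pow {1..m}"
    and "f0 K < m \<or> f0 (alex_dual m K) < m"
  shows "(chromatic_number (bier m K) = m - 1 \<longleftrightarrow>
           (\<exists>\<sigma>. \<sigma> permutes {1..m} \<and>
              ((`) ((`) \<sigma>) K = Pow {1..m-1} \<or>
               (`) ((`) \<sigma>) K = Pow {1..m-2} \<or>
               (`) ((`) \<sigma>) K = Pow {1..m-1} \<union> Pow ({1..m-2} \<union> {m}))))
       \<and> ((\<exists>\<sigma>. \<sigma> permutes {1..m} \<and>
              ((`) ((`) \<sigma>) K = Pow {1..m-1} \<or>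
               (`) ((`) \<sigma>) K = Pow {1..m-2} \<or>
               (`) ((`) \<sigma>) K = Pow {1..m-1} \<union> Pow ({1..m-2} \<union> {m})))
          \<longrightarrow> complex_iso (bier m K) ((suspension ^^ (m - 3)) Z4))"
proof -
  have "chromatic_number (bier m K) = m - 1 \<longleftrightarrow> exceptional_complex m K"
  proof
    assume "chromatic_number (bier m K) = m - 1"
    then have "colorable (bier m K) (m - 1)"
      using colorable_chromatic_number[OF colorable_bier[OF assms(2)]] by simp
    then show "exceptional_complex m K" by (rule exceptional_of_colorable_bier[OF assms(2-4)])
  next
    assume "exceptional_complex m K"
    then show "chromatic_number (bier m K) = m - 1"
      by (intro chromatic_number_eqI colorable_bier_exceptional colorable_bier_ge[OF assms(2-4)])
  qed
  then show ?thesis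
    unfolding exceptional_complex_iff_normal_form[OF assms(1), symmetric]
    using complex_iso_bier_exceptional[OF assms(1)] by blast
qed

end
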